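(* Let $n\ge2$, $m\in\mathbb{Z}_{>0}$, $q\in(-1,1)$. For every $\mu\in\Lambda^{(m+1,n)}_{\texttt{a}}\setminus\Lambda^{(m,n)}_{\texttt{a}}$ define \[ Q_{\texttt{a};\mu}(\boldsymbol{\xi})=P_{\texttt{a};\mu}(\boldsymbol{\xi};q)-q^{\mathrm{m}_{\mu_1}(\mu)\,\mathrm{m}_{\mu_n}(\mu)}P_{\texttt{a};\mu-\omega_{\texttt{a};\mu}}(\boldsymbol{\xi};q),\quad \omega_{\texttt{a};\mu}=\sum_{j=1}^{\min(\mathrm{m}_{\mu_1}(\mu),\mathrm{m}_{\mu_n}(\mu))}\bigl(e_{\mathrm{m}_{\mu_1}(\mu)+1-j}-e_{n-\mathrm{m}_{\mu_n}(\mu)+j}\bigr). \] Then $Q_{\texttt{a};\mu}(\boldsymbol{\xi}^{(m,n)}_{\texttt{a};\lambda})=0$ for all $\lambda\in\Lambda^{(m,n)}_{\texttt{a}}$ and all $\mu\in\Lambda^{(m+1,n)}_{\texttt{a}}\setminus\Lambda^{(m,n)}_{\texttt{a}}$; i.e. the nodes are common roots of these $\binom{m+n-1}{m+1}$ polynomials.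
   Context: $\mathrm{m}_x(\mathbf{x})=|\{1\le j\le n: x_j=x\}|$ for $\mathbf{x}\in\mathbb{R}^n$. Let $e_1,\dots,e_n$ be the standard basis of $\mathbb{R}^n$, $\omega_j=e_1+\dots+e_j-\frac{j}{n}(e_1+\dots+e_n)$ ($j=1,\dots,n-1$), and for an integer $D\ge0$, $\Lambda^{(D,n)}_{\texttt{a}}=\{l_1\omega_1+\dots+l_{n-1}\omega_{n-1}: l_j\in\mathbb{Z}_{\ge0},\ l_1+\dots+l_{n-1}\le D\}$. For $\mu$ in the $\mathbb{Z}$-span of the $\omega_j$: $C_{\texttt{a}}(\boldsymbol{\xi};q)=\prod_{1\le j<k\le n}\frac{1-qe^{-i(\xi_j-\xi_k)}}{1-e^{-i(\xi_j-\xi_k)}}$, $P_{\texttt{a};\mu}(\boldsymbol{\xi};q)=\sum_{\sigma\in S_n}C_{\texttt{a}}(\xi_{\sigma_1},\dots,\xi_{\sigma_n};q)\exp(i\sum_j\xi_{\sigma_j}\mu_j)$. Let $u_q(\theta)=\frac{1-q^2}{1-2q\cos\theta+q^2}$, $v_q(\vartheta)=\int_0^\vartheta u_q(\theta)\,\mathrm{d}\theta$, $\varrho_{\texttt{a};j}=\frac12(n+1-2j)$. For $\lambda\in\Lambda^{(m,n)}_{\texttt{a}}$, $\boldsymbol{\xi}^{(m,n)}_{\texttt{a};\lambda}\in\mathbb{R}^n$ is the unique solution of $m\xi_j+\sum_{k\ne j}v_q(\xi_j-\xi_k)=2\pi(\lambda_j+\varrho_{\texttt{a};j})$, $j=1,\dots,n$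 (the unique minimizer of an associated strictly convex function). *)

theory Defs
  imports "HOL-Analysis.Analysis" "HOL-Combinatorics.Permutations"
begin

text \<open>Vectors in R^n are represented as functions nat => real; only the
  coordinates 1..n are meaningful (all constructed vectors vanish outside 1..n).\<close>

definition multiplicity_in :: "real \<Rightarrow> (nat \<Rightarrow> real) \<Rightarrow> nat \<Rightarrow> nat" where
  "multiplicity_in x v n = card {j \<in> {1..n}. v j = x}"

definition std_basis :: "nat \<Rightarrow> nat \<Rightarrow> nat \<Rightarrow> real" where
  "std_basis n j = (\<lambda>k. if k = j \<and> 1 \<le> k \<and> k \<le> n then 1 else 0)"

definition fund_weight :: "nat \<Rightarrow> nat \<Rightarrow> nat \<Rightarrow> real" where
  "fund_weight n j = (\<lambda>k. if 1 \<le> k \<and> k \<le> n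
      then (if k \<le> j then 1 else 0) - real j / real n else 0)"

definition Lambda_a :: "nat \<Rightarrow> nat \<Rightarrow> (nat \<Rightarrow> real) set" where
  "Lambda_a D n = {(\<lambda>k. \<Sum>j\<in>{1..n-1}. real (l j) * fund_weight n j k) | l :: nat \<Rightarrow> nat.
                     (\<Sum>j\<in>{1..n-1}. l j) \<le> D}"

definition C_a :: "nat \<Rightarrow> (nat \<Rightarrow> real) \<Rightarrow> real \<Rightarrow> complex" where
  "C_a n xi q = (\<Prod>(j,k)\<in>{(j,k). 1 \<le> j \<and> j < k \<and> k \<le> n}.
      (1 - complex_of_real q * exp (- \<i> * complex_of_real (xi j - xi k)))
      / (1 - exp (- \<i> * complex_of_real (xi j - xi k))))"

definition P_a :: "nat \<Rightarrow> (nat \<Rightarrow> real) \<Rightarrow> (nat \<Rightarrow> real) \<Rightarrow> real \<Rightarrow> complex" where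
  "P_a n mu xi q = (\<Sum>\<sigma>\<in>{\<sigma>. \<sigma> permutes {1..n}}.
      C_a n (xi \<circ> \<sigma>) q * exp (\<i> * complex_of_real (\<Sum>j\<in>{1..n}. xi (\<sigma> j) * mu j)))"

definition u_q :: "real \<Rightarrow> real \<Rightarrow> real" where
  "u_q q \<theta> = (1 - q^2) / (1 - 2 * q * cos \<theta> + q^2)"

text \<open>Signed integral from 0 to the upper limit.\<close>
definition v_q :: "real \<Rightarrow> real \<Rightarrow> real" where
  "v_q q th = (LBINT \<theta>=ereal 0..ereal th. u_q q \<theta>)"

definition rho_a :: "nat \<Rightarrow> nat \<Rightarrow> real" where
  "rho_a n j = (real n + 1 - 2 * real j) / 2"

definition is_node :: "nat \<Rightarrow> nat \<Rightarrow> real \<Rightarrow> (nat \<Rightarrow> real) \<Rightarrow> (nat \<Rightarrow> real) \<Rightarrow> bool" where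
  "is_node m n q lam xi \<longleftrightarrow>
     (\<forall>j\<in>{1..n}. real m * xi j + (\<Sum>k\<in>{1..n} - {j}. v_q q (xi j - xi k))
                 = 2 * pi * (lam j + rho_a n j))"

definition omega_mu :: "nat \<Rightarrow> (nat \<Rightarrow> real) \<Rightarrow> nat \<Rightarrow> real" where
  "omega_mu n mu = (let a = multiplicity_in (mu 1) mu n; b = multiplicity_in (mu n) mu n in
     (\<lambda>k. \<Sum>j\<in>{1..min a b}. std_basis n (a + 1 - j) k - std_basis n (n - b + j) k))"

definition Q_a :: "nat \<Rightarrow> (nat \<Rightarrow> real) \<Rightarrow> (nat \<Rightarrow> real) \<Rightarrow> real \<Rightarrow> complex" where
  "Q_a n mu xi q = P_a n mu xi q
     - complex_of_real (q ^ (multiplicity_in (mu 1) mu n * multiplicity_in (mu n) mu n))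
       * P_a n (\<lambda>k. mu k - omega_mu n mu k) xi q"

end

theory Submission
  imports Defs
begin

text \<open>
  Two exchange relations for the polynomials P_mu make Q_mu vanish at the nodes.

  Straightening: if mu_(i+1) = mu_i + 1 then P_mu = q P_(s_i mu) identically in xi. In the sum over
  permutations, sigma and sigma s_i differ only in the factor of C_a belonging to the pair (i, i+1),
  and the two contributions of P_mu - q P_(s_i mu) cancel.

  Cycling: e^(i v_q(theta)) = (e^(i theta) - q) / (1 - q e^(i theta)), so reversing the argument of a
  factor of C_a costs the phase -e^(i v_q). Moving the first coordinate to the end reverses the n - 1
  factors containing it, and at a node the Bethe equations collect their phases into a constant c:
  P_mu = c P_(mu_2, ..., mu_n, mu_1 - m).

  For mu in Lambda^(m+1) minus Lambda^(m) one has mu_1 = mu_n + m + 1. Cycling the leading block of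
  a = m_(mu_1)(mu) entries to the back turns them into entries mu_n + 1; straightening them past the
  trailing block of b = m_(mu_n)(mu) entries mu_n costs q^(ab), and produces the same cycle of
  mu - omega_mu. If two coordinates of xi agree modulo 2 pi instead, C_a vanishes at every
  permutation of xi.
\<close>

section \<open>The phase function\<close>

lemma exp_i_of_real:
  "exp (\<i> * complex_of_real x) = complex_of_real (cos x) + \<i> * complex_of_real (sin x)"
  unfolding cis_conv_exp[symmetric] by (simp add: complex_eq_iff)

lemma exp_i_double_arctan:
  "exp (\<i> * complex_of_real (2 * arctan t)) = (1 + \<i> * t) / (1 - \<i> * t)"
proof -
  define s where "s = sqrt (1 + t\<^sup>2)"
  have cs: "cos (arctan t) = 1 / s" "sin (arctan t) = t / s"
    by (simp_all add: s_def cos_arctan sin_arctan)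
  have s2: "(complex_of_real s)\<^sup>2 = (1 + \<i> * t) * (1 - \<i> * t)"
    unfolding s_def of_real_power[symmetric] by (simp add: complex_eq_iff power2_eq_square)
  have ne: "1 - \<i> * complex_of_real t \<noteq> 0" "1 + \<i> * complex_of_real t \<noteq> 0"
    by (simp_all add: complex_eq_iff)
  have "exp (\<i> * complex_of_real (2 * arctan t)) = (exp (\<i> * complex_of_real (arctan t)))\<^sup>2"
    by (simp add: exp_double[symmetric] algebra_simps)
  also have "exp (\<i> * complex_of_real (arctan t)) = (1 + \<i> * t) / s"
    by (simp add: exp_i_of_real cs add_divide_distrib)
  also have "((1 + \<i> * t) / s)\<^sup>2 = (1 + \<i> * t)\<^sup>2 / (complex_of_real s)\<^sup>2"
    by (rule power_divide)
  also have "\<dots> = (1 + \<i> * t) / (1 - \<i> * t)"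
    unfolding s2 using ne by (simp add: power2_eq_square)
  finally show ?thesis .
qed

lemma poisson_denominator_eq:
  "1 - 2 * q * cos x + q\<^sup>2 = (1 - q * cos x)\<^sup>2 + (q * sin x)\<^sup>2" for q x :: real
  using sin_cos_squared_add[of x] by algebra

lemma one_minus_q_cos_pos: "\<bar>q\<bar> < 1 \<Longrightarrow> 0 < 1 - q * cos x" for q x :: real
proof -
  have "\<bar>q * cos x\<bar> \<le> \<bar>q\<bar>" by (simp add: abs_mult mult_left_le)
  then show "\<bar>q\<bar> < 1 \<Longrightarrow> 0 < 1 - q * cos x" by linarith
qed

lemma poisson_denominator_pos:
  fixes q x :: real
  assumes "\<bar>q\<bar> < 1"
  shows "0 < 1 - 2 * q * cos x + q\<^sup>2"
proof -
  have "0 < 1 - q * cos x" using assms by (rule one_minus_q_cos_pos)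
  then show ?thesis unfolding poisson_denominator_eq by (intro add_pos_nonneg) auto
qed

definition v_closed :: "real \<Rightarrow> real \<Rightarrow> real" where
  "v_closed q x = x + 2 * arctan (q * sin x / (1 - q * cos x))"

lemma has_real_derivative_v_closed:
  assumes q: "\<bar>q\<bar> < 1"
  shows "(v_closed q has_real_derivative u_q q x) (at x)"
proof -
  define d where "d = 1 - q * cos x"
  define D where "D = 1 - 2 * q * cos x + q\<^sup>2"
  define N where "N = q * cos x * d - q * sin x * (q * sin x)"
  have d: "d > 0" unfolding d_def by (rule one_minus_q_cos_pos[OF q])
  have D: "D > 0" unfolding D_def by (rule poisson_denominator_pos[OF q])
  have "(v_closed q has_real_derivative 1 + 2 * (inverse (1 + (q * sin x / d)\<^sup>2) * (N / (d * d)))) (at x)"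
    unfolding v_closed_def d_def N_def using d[unfolded d_def]
    by (auto intro!: derivative_eq_intros)
  also have "1 + (q * sin x / d)\<^sup>2 = D / d\<^sup>2"
    using d unfolding D_def poisson_denominator_eq d_def by (simp add: field_simps)
  also have "N = q * cos x - q\<^sup>2"
    unfolding N_def d_def using sin_cos_squared_add[of x] by algebra
  also have "inverse (D / d\<^sup>2) * ((q * cos x - q\<^sup>2) / (d * d)) = (q * cos x - q\<^sup>2) / D"
    using d by (simp add: power2_eq_square)
  also have "1 + 2 * ((q * cos x - q\<^sup>2) / D) = u_q q x"
    using D unfolding u_q_def D_def by (simp add: field_simps)
  finally show ?thesis .
qed

lemma v_q_eq_v_closed:
  assumes q: "\<bar>q\<bar> < 1"
  shows "v_q q \<theta> = v_closed q \<theta>"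
proof -
  have "1 - 2 * q * cos x + q\<^sup>2 \<noteq> 0" for x
    using poisson_denominator_pos[OF q, of x] by simp
  then have "continuous_on {min 0 \<theta>..max 0 \<theta>} (u_q q)"
    unfolding u_q_def by (intro continuous_intros) auto
  then have "(LBINT x=ereal 0..ereal \<theta>. u_q q x) = v_closed q \<theta> - v_closed q 0"
    by (rule interval_integral_FTC_finite)
       (rule has_vector_derivative_at_within,
        simp add: has_real_derivative_iff_has_vector_derivative[symmetric] has_real_derivative_v_closed[OF q])
  then show ?thesis by (simp add: v_q_def v_closed_def)
qed

lemma exp_i_v_q:
  assumes q: "\<bar>q\<bar> < 1"
  shows "exp (\<i> * complex_of_real (v_q q \<theta>)) =
    (exp (\<i> * complex_of_real \<theta>) - q) / (1 - q * exp (\<i> * complex_of_real \<theta>))"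
proof -
  define E where "E = exp (\<i> * complex_of_real \<theta>)"
  define d where "d = 1 - q * cos \<theta>"
  define t where "t = q * sin \<theta> / d"
  have d: "d > 0" unfolding d_def by (rule one_minus_q_cos_pos[OF q])
  have E: "E = complex_of_real (cos \<theta>) + \<i> * complex_of_real (sin \<theta>)"
    unfolding E_def by (rule exp_i_of_real)
  have num: "1 + \<i> * t = (1 - q * cnj E) / d" and den: "1 - \<i> * t = (1 - q * E) / d"
    using d unfolding t_def E d_def by (simp_all add: complex_eq_iff field_simps)
  have "E * cnj E = 1"
    unfolding E_def complex_norm_square[symmetric] by simp
  then have "E * (1 - q * cnj E) = E - q" by (simp add: algebra_simps)
  have "exp (\<i> * complex_of_real (v_q q \<theta>)) = E * exp (\<i> * complex_of_real (2 * arctan t))"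
    unfolding v_q_eq_v_closed[OF q] v_closed_def E_def t_def d_def
    by (simp only: of_real_add distrib_left exp_add)
  also have "\<dots> = E * (1 - q * cnj E) / (1 - q * E)"
    unfolding exp_i_double_arctan num den using d by simp
  also have "\<dots> = (E - q) / (1 - q * E)"
    unfolding \<open>E * (1 - q * cnj E) = E - q\<close> ..
  finally show ?thesis unfolding E_def .
qed

section \<open>The terms of P_a\<close>

definition C_factor :: "real \<Rightarrow> real \<Rightarrow> complex" where
  "C_factor q \<theta> = (1 - q * exp (- \<i> * \<theta>)) / (1 - exp (- \<i> * \<theta>))"

definition index_pairs :: "nat \<Rightarrow> (nat \<times> nat) set" where
  "index_pairs n = {(j, k). 1 \<le> j \<and> j < k \<and> k \<le> n}"

lemma finite_index_pairs: "finite (index_pairs n)"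
  by (rule finite_subset[of _ "{1..n} \<times> {1..n}"]) (auto simp: index_pairs_def)

lemma C_a_eq_prod_C_factor: "C_a n y q = (\<Prod>p\<in>index_pairs n. C_factor q (y (fst p) - y (snd p)))"
  unfolding C_a_def index_pairs_def C_factor_def by (simp add: case_prod_beta)

text \<open>Here the denominator of the factor vanishes, and division by zero yields 0.\<close>
lemma C_factor_eq_0: "exp (\<i> * complex_of_real \<theta>) = 1 \<Longrightarrow> C_factor q \<theta> = 0"
  by (simp add: C_factor_def exp_minus)

lemma one_minus_q_exp_i_neq_0:
  assumes "\<bar>q\<bar> < 1"
  shows "1 - complex_of_real q * exp (\<i> * complex_of_real \<theta>) \<noteq> 0"
proof
  assume "1 - complex_of_real q * exp (\<i> * complex_of_real \<theta>) = 0"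
  then have "norm (complex_of_real q * exp (\<i> * complex_of_real \<theta>)) = 1" by simp
  then show False using assms by (simp add: norm_mult)
qed

lemma C_factor_reflect:
  assumes q: "\<bar>q\<bar> < 1" and ne: "exp (\<i> * complex_of_real \<theta>) \<noteq> 1"
  shows "C_factor q \<theta> = - exp (\<i> * complex_of_real (v_q q \<theta>)) * C_factor q (- \<theta>)"
proof -
  define E where "E = exp (\<i> * complex_of_real \<theta>)"
  have E: "E \<noteq> 0" "E - 1 \<noteq> 0" "1 - q * E \<noteq> 0"
    using ne one_minus_q_exp_i_neq_0[OF q] unfolding E_def by auto
  have "C_factor q \<theta> = (1 - q * inverse E) / (1 - inverse E)"
    by (simp add: C_factor_def E_def exp_minus)
  also have "\<dots> = - ((E - q) / (1 - E))"
    using E by (simp add: field_simps)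
  also have "\<dots> = - ((E - q) / (1 - q * E)) * ((1 - q * E) / (1 - E))"
    using E(3) by (simp add: minus_divide_left)
  also have "(1 - q * E) / (1 - E) = C_factor q (- \<theta>)"
    by (simp add: C_factor_def E_def)
  finally show ?thesis unfolding exp_i_v_q[OF q] E_def .
qed

lemma prod_C_factor_reflect:
  assumes q: "\<bar>q\<bar> < 1" and "finite K"
    and ne: "\<And>k. k \<in> K \<Longrightarrow> exp (\<i> * complex_of_real (f k)) \<noteq> 1"
  shows "(\<Prod>k\<in>K. C_factor q (f k)) =
    (-1) ^ card K * exp (\<i> * complex_of_real (\<Sum>k\<in>K. v_q q (f k))) * (\<Prod>k\<in>K. C_factor q (- f k))"
proof -
  have "C_factor q (f k) = (-1) * (exp (\<i> * complex_of_real (v_q q (f k))) * C_factor q (- f k))"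
    if "k \<in> K" for k
    using C_factor_reflect[OF q ne[OF that]] by simp
  then have "(\<Prod>k\<in>K. C_factor q (f k)) =
      (\<Prod>k\<in>K. (-1) * (exp (\<i> * complex_of_real (v_q q (f k))) * C_factor q (- f k)))"
    by (rule prod.cong[OF refl])
  also have "\<dots> = (-1) ^ card K * ((\<Prod>k\<in>K. exp (\<i> * complex_of_real (v_q q (f k))))
      * (\<Prod>k\<in>K. C_factor q (- f k)))"
    by (simp only: prod.distrib prod_constant)
  also have "(\<Prod>k\<in>K. exp (\<i> * complex_of_real (v_q q (f k)))) = exp (\<i> * complex_of_real (\<Sum>k\<in>K. v_q q (f k)))"
    using \<open>finite K\<close> by (simp add: exp_sum sum_distrib_left)
  finally show ?thesis by (simp only: mult.assoc)
qed

lemma C_a_transpose_adjacent: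
  assumes i: "1 \<le> i" "i < n"
  obtains B where "C_a n y q = C_factor q (y i - y (Suc i)) * B"
    and "C_a n (y \<circ> Transposition.transpose i (Suc i)) q = C_factor q (y (Suc i) - y i) * B"
proof -
  define s where "s = Transposition.transpose i (Suc i)"
  define R where "R = index_pairs n - {(i, Suc i)}"
  have R: "index_pairs n = insert (i, Suc i) R" "(i, Suc i) \<notin> R" "finite R"
    using i finite_index_pairs[of n] by (auto simp: R_def index_pairs_def)
  define h where "h = (\<lambda>p. (s (fst p), s (snd p)))"
  have "h ` R \<subseteq> R"
    using i unfolding h_def R_def index_pairs_def s_def Transposition.transpose_def by (auto split: if_splits)
  moreover have "\<forall>p\<in>R. h (h p) = p"
    unfolding h_def s_def by simp
  ultimately have h: "bij_betw h R R"
    by (intro bij_betw_byWitness) auto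
  define B where "B = (\<Prod>p\<in>R. C_factor q (y (fst p) - y (snd p)))"
  have "C_a n y q = C_factor q (y i - y (Suc i)) * B"
    unfolding C_a_eq_prod_C_factor R(1) B_def using R by simp
  moreover have "C_a n (y \<circ> s) q = C_factor q (y (Suc i) - y i) * B"
  proof -
    have "C_a n (y \<circ> s) q = C_factor q (y (Suc i) - y i) *
        (\<Prod>p\<in>R. C_factor q (y (fst (h p)) - y (snd (h p))))"
      unfolding C_a_eq_prod_C_factor R(1) using R by (simp add: s_def h_def)
    also have "(\<Prod>p\<in>R. C_factor q (y (fst (h p)) - y (snd (h p)))) = B"
      unfolding B_def by (rule prod.reindex_bij_betw[OF h])
    finally show ?thesis .
  qed
  ultimately show ?thesis using that unfolding s_def by blast
qed

definition cycle_perm :: "nat \<Rightarrow> nat \<Rightarrow> nat" where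
  "cycle_perm n j = (if 1 \<le> j \<and> j < n then Suc j else if j = n then 1 else j)"

lemma cycle_perm_permutes:
  assumes "n \<ge> 1"
  shows "cycle_perm n permutes {1..n}"
proof (rule bij_imp_permutes)
  define inv_cycle where "inv_cycle = (\<lambda>j. if 2 \<le> j \<and> j \<le> n then j - 1 else if j = 1 then n else j)"
  show "bij_betw (cycle_perm n) {1..n} {1..n}"
    by (rule bij_betw_byWitness[of _ inv_cycle]) (use assms in \<open>auto simp: cycle_perm_def inv_cycle_def\<close>)
  show "\<And>x. x \<notin> {1..n} \<Longrightarrow> cycle_perm n x = x"
    using assms by (auto simp: cycle_perm_def)
qed

lemma C_a_cong: "(\<And>j. j \<in> {1..n} \<Longrightarrow> y j = z j) \<Longrightarrow> C_a n y q = C_a n z q"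
  unfolding C_a_eq_prod_C_factor by (intro prod.cong refl) (auto simp: index_pairs_def)

lemma C_a_split_first:
  assumes "n \<ge> 1"
  shows "C_a n y q = (\<Prod>k\<in>{2..n}. C_factor q (y 1 - y k)) * C_a (n - 1) (y \<circ> Suc) q"
proof -
  let ?F = "\<lambda>p. C_factor q (y (fst p) - y (snd p))"
  define h where "h = (\<lambda>p. (Suc (fst p), Suc (snd p)))"
  have "index_pairs n = Pair 1 ` {2..n} \<union> h ` index_pairs (n - 1)"
  proof (intro equalityI subsetI)
    fix p assume "p \<in> index_pairs n"
    then obtain j k where p: "p = (j, k)" "1 \<le> j" "j < k" "k \<le> n"
      by (auto simp: index_pairs_def)
    show "p \<in> Pair 1 ` {2..n} \<union> h ` index_pairs (n - 1)"
    proof (cases "j = 1")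
      case False
      then have "p = h (j - 1, k - 1)" "(j - 1, k - 1) \<in> index_pairs (n - 1)"
        using p by (auto simp: h_def index_pairs_def)
      then show ?thesis by blast
    qed (use p in auto)
  qed (auto simp: index_pairs_def h_def)
  moreover have "Pair 1 ` {2..n} \<inter> h ` index_pairs (n - 1) = {}"
    by (auto simp: index_pairs_def h_def)
  ultimately have "C_a n y q = prod ?F (Pair 1 ` {2..n}) * prod ?F (h ` index_pairs (n - 1))"
    unfolding C_a_eq_prod_C_factor by (simp add: prod.union_disjoint finite_index_pairs)
  also have "prod ?F (Pair 1 ` {2..n}) = (\<Prod>k\<in>{2..n}. C_factor q (y 1 - y k))"
    by (subst prod.reindex) (auto simp: inj_on_def)
  also have "prod ?F (h ` index_pairs (n - 1)) = C_a (n - 1) (y \<circ> Suc) q"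
    unfolding C_a_eq_prod_C_factor by (subst prod.reindex) (auto simp: inj_on_def h_def)
  finally show ?thesis .
qed

lemma C_a_split_last:
  assumes "n \<ge> 1"
  shows "C_a n y q = (\<Prod>j\<in>{1..n-1}. C_factor q (y j - y n)) * C_a (n - 1) y q"
proof -
  let ?F = "\<lambda>p. C_factor q (y (fst p) - y (snd p))"
  have "index_pairs n = (\<lambda>j. (j, n)) ` {1..n-1} \<union> index_pairs (n - 1)"
    using assms by (auto simp: index_pairs_def)
  moreover have "(\<lambda>j. (j, n)) ` {1..n-1} \<inter> index_pairs (n - 1) = {}"
    by (auto simp: index_pairs_def)
  ultimately have "C_a n y q = prod ?F ((\<lambda>j. (j, n)) ` {1..n-1}) * prod ?F (index_pairs (n - 1))"
    unfolding C_a_eq_prod_C_factor by (simp add: prod.union_disjoint finite_index_pairs)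
  also have "prod ?F ((\<lambda>j. (j, n)) ` {1..n-1}) = (\<Prod>j\<in>{1..n-1}. C_factor q (y j - y n))"
    by (subst prod.reindex) (auto simp: inj_on_def)
  finally show ?thesis unfolding C_a_eq_prod_C_factor .
qed

lemma C_a_cycle_perm:
  assumes n: "n \<ge> 2"
  shows "C_a n (y \<circ> cycle_perm n) q = (\<Prod>k\<in>{2..n}. C_factor q (y k - y 1)) * C_a (n - 1) (y \<circ> Suc) q"
proof -
  have "C_a n (y \<circ> cycle_perm n) q
      = (\<Prod>j\<in>{1..n-1}. C_factor q ((y \<circ> cycle_perm n) j - (y \<circ> cycle_perm n) n)) * C_a (n - 1) (y \<circ> cycle_perm n) q"
    using n by (intro C_a_split_last) simp
  also have "(\<Prod>j\<in>{1..n-1}. C_factor q ((y \<circ> cycle_perm n) j - (y \<circ> cycle_perm n) n))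
      = (\<Prod>j\<in>{1..n-1}. C_factor q (y (Suc j) - y 1))"
    by (intro prod.cong refl) (auto simp: cycle_perm_def)
  also have "\<dots> = (\<Prod>k\<in>{2..n}. C_factor q (y k - y 1))"
  proof -
    have "{2..n} = {Suc 1..Suc (n - 1)}" using n by auto
    then show ?thesis by (simp only: prod.shift_bounds_cl_Suc_ivl)
  qed
  also have "C_a (n - 1) (y \<circ> cycle_perm n) q = C_a (n - 1) (y \<circ> Suc) q"
    by (rule C_a_cong) (auto simp: cycle_perm_def)
  finally show ?thesis .
qed

lemma C_a_eq_0_if_coincident:
  assumes "j \<in> {1..n}" "k \<in> {1..n}" "j \<noteq> k"
    and coincide: "exp (\<i> * complex_of_real (y j - y k)) = 1"
  shows "C_a n y q = 0"
proof -
  have "exp (\<i> * complex_of_real (y k - y j)) = inverse (exp (\<i> * complex_of_real (y j - y k)))"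
    by (simp add: exp_minus[symmetric] algebra_simps)
  with coincide have coincide': "exp (\<i> * complex_of_real (y k - y j)) = 1" by simp
  have "\<exists>p\<in>index_pairs n. exp (\<i> * complex_of_real (y (fst p) - y (snd p))) = 1"
  proof (cases "j < k")
    case True
    then show ?thesis using assms by (intro bexI[of _ "(j, k)"]) (auto simp: index_pairs_def)
  next
    case False
    then show ?thesis using assms coincide' by (intro bexI[of _ "(k, j)"]) (auto simp: index_pairs_def)
  qed
  then obtain p where p: "p \<in> index_pairs n" "exp (\<i> * complex_of_real (y (fst p) - y (snd p))) = 1"
    by blast
  have "C_factor q (y (fst p) - y (snd p)) = 0" using p(2) by (rule C_factor_eq_0)
  with p(1) show ?thesis
    unfolding C_a_eq_prod_C_factor by (intro prod_zero finite_index_pairs) blast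
qed

definition P_term :: "nat \<Rightarrow> real \<Rightarrow> (nat \<Rightarrow> real) \<Rightarrow> (nat \<Rightarrow> real) \<Rightarrow> (nat \<Rightarrow> nat) \<Rightarrow> complex" where
  "P_term n q xi a \<sigma> = C_a n (xi \<circ> \<sigma>) q * exp (\<i> * complex_of_real (\<Sum>j\<in>{1..n}. (xi \<circ> \<sigma>) j * a j))"

lemma P_a_eq_sum_P_term: "P_a n a xi q = (\<Sum>\<sigma>\<in>{\<sigma>. \<sigma> permutes {1..n}}. P_term n q xi a \<sigma>)"
  by (simp add: P_a_def P_term_def)

lemma P_a_cong: "(\<And>j. j \<in> {1..n} \<Longrightarrow> a j = b j) \<Longrightarrow> P_a n a xi q = P_a n b xi q"
  unfolding P_a_def by (intro sum.cong refl) simp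

lemma P_a_eq_0_if_coincident:
  assumes "j \<in> {1..n}" "k \<in> {1..n}" "j \<noteq> k"
    and "exp (\<i> * complex_of_real (xi j - xi k)) = 1"
  shows "P_a n a xi q = 0"
proof -
  have "C_a n (xi \<circ> \<sigma>) q = 0" if \<sigma>: "\<sigma> permutes {1..n}" for \<sigma>
  proof (rule C_a_eq_0_if_coincident)
    show "inv \<sigma> j \<in> {1..n}" "inv \<sigma> k \<in> {1..n}"
      using assms(1,2) permutes_in_image[OF permutes_inv[OF \<sigma>]] by auto
    show "inv \<sigma> j \<noteq> inv \<sigma> k"
      using assms(3) by (metis \<sigma> permutes_inverses(1))
    show "exp (\<i> * complex_of_real ((xi \<circ> \<sigma>) (inv \<sigma> j) - (xi \<circ> \<sigma>) (inv \<sigma> k))) = 1"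
      using assms(4) by (simp add: permutes_inverses(1)[OF \<sigma>])
  qed
  then show ?thesis unfolding P_a_eq_sum_P_term P_term_def by simp
qed

section \<open>Straightening\<close>

lemma sum_mult_transpose_adjacent:
  fixes y a :: "nat \<Rightarrow> real"
  assumes i: "1 \<le> i" "i < n" and a: "a (Suc i) = a i + 1"
  shows "(\<Sum>j\<in>{1..n}. y j * a j) =
    (\<Sum>j\<in>{1..n}. y j * (a \<circ> Transposition.transpose i (Suc i)) j) + (y (Suc i) - y i)"
proof -
  define s where "s = Transposition.transpose i (Suc i)"
  have "(\<Sum>j\<in>{1..n}. y j * a j) - (\<Sum>j\<in>{1..n}. y j * (a \<circ> s) j) = (\<Sum>j\<in>{1..n}. y j * (a j - a (s j)))"
    by (simp add: sum_subtractf[symmetric] algebra_simps)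
  also have "\<dots> = (\<Sum>j\<in>{i, Suc i}. y j * (a j - a (s j)))"
    by (rule sum.mono_neutral_right) (use i in \<open>auto simp: s_def Transposition.transpose_def\<close>)
  also have "\<dots> = y (Suc i) - y i"
    using a by (simp add: s_def algebra_simps)
  finally show ?thesis unfolding s_def by simp
qed

lemma C_factor_straighten:
  "C_factor q (- \<theta>) * (exp (\<i> * complex_of_real \<theta>) - q)
   + C_factor q \<theta> * (1 - q * exp (\<i> * complex_of_real \<theta>)) = 0"
proof -
  define W where "W = exp (\<i> * complex_of_real \<theta>)"
  have W: "W \<noteq> 0" by (simp add: W_def)
  have "C_factor q (- \<theta>) = (1 - q * W) / (1 - W)" "C_factor q \<theta> = (1 - q * inverse W) / (1 - inverse W)"
    by (simp_all add: C_factor_def W_def exp_minus)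
  moreover have "(1 - q * W) / (1 - W) * (W - q) + (1 - q * inverse W) / (1 - inverse W) * (1 - q * W) = 0"
  proof (cases "W = 1")
    case False
    then have "1 - W \<noteq> 0" "W - 1 \<noteq> 0" by auto
    then show ?thesis using W by (simp add: field_simps)
  qed simp
  ultimately show ?thesis unfolding W_def by simp
qed

lemma P_term_transpose_adjacent:
  assumes i: "1 \<le> i" "i < n" and a: "a (Suc i) = a i + 1"
  defines "s \<equiv> Transposition.transpose i (Suc i)"
  shows "P_term n q xi a \<sigma> - q * P_term n q xi (a \<circ> s) \<sigma>
       + (P_term n q xi a (\<sigma> \<circ> s) - q * P_term n q xi (a \<circ> s) (\<sigma> \<circ> s)) = 0"
proof -
  define y where "y = xi \<circ> \<sigma>"
  obtain B where B: "C_a n y q = C_factor q (y i - y (Suc i)) * B"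
      "C_a n (y \<circ> s) q = C_factor q (y (Suc i) - y i) * B"
    using C_a_transpose_adjacent[OF i] unfolding s_def by metis
  have s: "s permutes {1..n}"
    unfolding s_def by (rule permutes_swap_id) (use i in auto)
  have sum_s_a: "(\<Sum>j\<in>{1..n}. (y \<circ> s) j * a j) = (\<Sum>j\<in>{1..n}. y j * (a \<circ> s) j)"
    using sum.permute[OF s, of "\<lambda>j. y j * (a \<circ> s) j"] by (simp add: o_def s_def)
  have sum_s_s: "(\<Sum>j\<in>{1..n}. (y \<circ> s) j * (a \<circ> s) j) = (\<Sum>j\<in>{1..n}. y j * a j)"
    using sum.permute[OF s, of "\<lambda>j. y j * a j"] by (simp add: o_def)
  define E where "E = exp (\<i> * complex_of_real (\<Sum>j\<in>{1..n}. y j * (a \<circ> s) j))"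
  define W where "W = exp (\<i> * complex_of_real (y (Suc i) - y i))"
  have sum_a: "exp (\<i> * complex_of_real (\<Sum>j\<in>{1..n}. y j * a j)) = E * W"
    unfolding sum_mult_transpose_adjacent[OF i a] E_def W_def s_def by (simp add: distrib_left exp_add)
  have xi_s: "xi \<circ> (\<sigma> \<circ> s) = y \<circ> s" by (simp add: y_def o_assoc)
  have "P_term n q xi a \<sigma> - q * P_term n q xi (a \<circ> s) \<sigma>
       + (P_term n q xi a (\<sigma> \<circ> s) - q * P_term n q xi (a \<circ> s) (\<sigma> \<circ> s))
     = B * E * (C_factor q (- (y (Suc i) - y i)) * (W - q) + C_factor q (y (Suc i) - y i) * (1 - q * W))"
    unfolding P_term_def xi_s y_def[symmetric] sum_s_a sum_s_s sum_a E_def[symmetric] B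
    by (simp add: algebra_simps)
  also have "\<dots> = 0"
    unfolding W_def C_factor_straighten by simp
  finally show ?thesis .
qed

lemma P_a_straighten:
  assumes i: "1 \<le> i" "i < n" and a: "a (Suc i) = a i + 1"
  shows "P_a n a xi q = q * P_a n (a \<circ> Transposition.transpose i (Suc i)) xi q"
proof -
  define s where "s = Transposition.transpose i (Suc i)"
  define S where "S = {\<sigma>. \<sigma> permutes {1..n}}"
  define G where "G = (\<lambda>\<sigma>. P_term n q xi a \<sigma> - q * P_term n q xi (a \<circ> s) \<sigma>)"
  have s: "s permutes {1..n}"
    unfolding s_def by (rule permutes_swap_id) (use i in auto)
  have "sum G S = sum (\<lambda>\<sigma>. G (\<sigma> \<circ> s)) S"
    unfolding S_def by (rule sum_permutations_compose_right[OF s])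
  then have "2 * sum G S = sum (\<lambda>\<sigma>. G \<sigma> + G (\<sigma> \<circ> s)) S"
    by (simp add: sum.distrib)
  also have "\<dots> = 0"
    using P_term_transpose_adjacent[OF i a] unfolding G_def s_def by simp
  finally have "sum G S = 0" by simp
  moreover have "sum G S = P_a n a xi q - q * P_a n (a \<circ> s) xi q"
    unfolding G_def P_a_eq_sum_P_term S_def by (simp add: sum_subtractf sum_distrib_left)
  ultimately show ?thesis unfolding s_def by simp
qed

lemma P_a_bubble:
  assumes "1 \<le> u" "u + d \<le> n"
    and "\<And>j. u \<le> j \<Longrightarrow> j < u + d \<Longrightarrow> a j = r" and "a (u + d) = r + 1"
  shows "P_a n a xi q = complex_of_real q ^ d *
    P_a n (\<lambda>j. if j = u then r + 1 else if u < j \<and> j \<le> u + d then r else a j) xi q"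
  using assms
proof (induction d arbitrary: a)
  case 0
  then have "(\<lambda>j. if j = u then r + 1 else if u < j \<and> j \<le> u + 0 then r else a j) = a"
    by (auto simp: fun_eq_iff)
  then show ?case by simp
next
  case (Suc d)
  define i where "i = u + d"
  define s where "s = Transposition.transpose i (Suc i)"
  have i: "1 \<le> i" "i < n" and ai: "a (Suc i) = a i + 1"
    using Suc.prems unfolding i_def by auto
  have "P_a n a xi q = q * P_a n (a \<circ> s) xi q"
    unfolding s_def by (rule P_a_straighten[OF i ai])
  also have "P_a n (a \<circ> s) xi q = complex_of_real q ^ d *
      P_a n (\<lambda>j. if j = u then r + 1 else if u < j \<and> j \<le> u + d then r else (a \<circ> s) j) xi q"
    by (rule Suc.IH) (use Suc.prems in \<open>auto simp: s_def i_def Transposition.transpose_def\<close>)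
  also have "(\<lambda>j. if j = u then r + 1 else if u < j \<and> j \<le> u + d then r else (a \<circ> s) j) =
      (\<lambda>j. if j = u then r + 1 else if u < j \<and> j \<le> u + Suc d then r else a j)"
    using Suc.prems by (auto simp: fun_eq_iff s_def i_def Transposition.transpose_def)
  finally show ?case by simp
qed

definition block_weight :: "nat \<Rightarrow> nat \<Rightarrow> (nat \<Rightarrow> real) \<Rightarrow> real \<Rightarrow> nat \<Rightarrow> nat \<Rightarrow> real" where
  "block_weight t b M r i =
     (\<lambda>j. if j \<le> t then M j else if j \<le> t + i then r + 1 else if j \<le> t + i + b then r else r + 1)"

lemma P_a_block:
  assumes "t + a + b = n" and "i \<le> a"
  shows "P_a n (block_weight t b M r 0) xi q = complex_of_real q ^ (b * i) * P_a n (block_weight t b M r i) xi q"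
  using assms(2)
proof (induction i)
  case (Suc i)
  have "P_a n (block_weight t b M r i) xi q = complex_of_real q ^ b *
      P_a n (\<lambda>j. if j = t + i + 1 then r + 1 else if t + i + 1 < j \<and> j \<le> t + i + 1 + b then r
                  else block_weight t b M r i j) xi q"
    by (rule P_a_bubble) (use assms(1) Suc.prems in \<open>auto simp: block_weight_def\<close>)
  also have "(\<lambda>j. if j = t + i + 1 then r + 1 else if t + i + 1 < j \<and> j \<le> t + i + 1 + b then r
                  else block_weight t b M r i j) = block_weight t b M r (Suc i)"
    by (auto simp: fun_eq_iff block_weight_def)
  finally show ?case using Suc by (simp add: power_add algebra_simps)
qed simp

section \<open>Weights\<close>

lemma fund_weight_sum_diff:
  assumes "j \<in> {1..n}" "k \<in> {1..n}"
  shows "(\<Sum>i\<in>{1..n-1}. real (l i) * fund_weight n i j) - (\<Sum>i\<in>{1..n-1}. real (l i) * fund_weight n i k)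
       = (\<Sum>i\<in>{1..n-1}. real (l i) * (of_bool (j \<le> i) - of_bool (k \<le> i)))"
  unfolding sum_subtractf[symmetric]
  by (rule sum.cong) (use assms in \<open>auto simp: fund_weight_def algebra_simps\<close>)

lemma Lambda_a_diff_Ints:
  assumes "lam \<in> Lambda_a D n" "j \<in> {1..n}" "k \<in> {1..n}"
  shows "lam j - lam k \<in> \<int>"
proof -
  obtain l where "lam = (\<lambda>k. \<Sum>i\<in>{1..n-1}. real (l i) * fund_weight n i k)"
    using assms(1) unfolding Lambda_a_def by blast
  then have "lam j - lam k = (\<Sum>i\<in>{1..n-1}. real (l i) * (of_bool (j \<le> i) - of_bool (k \<le> i)))"
    using fund_weight_sum_diff[OF assms(2,3), of l] by simp
  also have "\<dots> \<in> \<int>"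
    by (intro Ints_sum Ints_mult Ints_diff) (auto simp: of_bool_def)
  finally show ?thesis .
qed

lemma Lambda_a_antimono:
  assumes "lam \<in> Lambda_a D n" "1 \<le> j" "j \<le> k" "k \<le> n"
  shows "lam k \<le> lam j"
proof -
  obtain l where "lam = (\<lambda>k. \<Sum>i\<in>{1..n-1}. real (l i) * fund_weight n i k)"
    using assms(1) unfolding Lambda_a_def by blast
  then have "lam j - lam k = (\<Sum>i\<in>{1..n-1}. real (l i) * (of_bool (j \<le> i) - of_bool (k \<le> i)))"
    using fund_weight_sum_diff[of j n k l] assms(2-4) by auto
  also have "\<dots> \<ge> 0"
    by (rule sum_nonneg) (use assms(3) in auto)
  finally show ?thesis by simp
qed

lemma Lambda_a_boundary_gap:
  assumes mu: "mu \<in> Lambda_a (m + 1) n - Lambda_a m n" and n: "n \<ge> 2"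
  shows "mu 1 = mu n + real m + 1"
proof -
  obtain l where l: "mu = (\<lambda>k. \<Sum>i\<in>{1..n-1}. real (l i) * fund_weight n i k)"
    and level: "(\<Sum>i\<in>{1..n-1}. l i) \<le> m + 1"
    using mu unfolding Lambda_a_def by blast
  have "(\<Sum>i\<in>{1..n-1}. l i) = m + 1"
  proof (rule ccontr)
    assume "(\<Sum>i\<in>{1..n-1}. l i) \<noteq> m + 1"
    with level have "(\<Sum>i\<in>{1..n-1}. l i) \<le> m" by simp
    then have "mu \<in> Lambda_a m n" unfolding Lambda_a_def l by blast
    with mu show False by simp
  qed
  have "mu 1 - mu n = (\<Sum>i\<in>{1..n-1}. real (l i) * (of_bool (1 \<le> i) - of_bool (n \<le> i)))"
    using fund_weight_sum_diff[of 1 n n l] n unfolding l by simp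
  also have "\<dots> = real (\<Sum>i\<in>{1..n-1}. l i)"
    unfolding of_nat_sum by (rule sum.cong) auto
  also have "\<dots> = real m + 1"
    unfolding \<open>(\<Sum>i\<in>{1..n-1}. l i) = m + 1\<close> by simp
  finally show ?thesis by simp
qed

lemma down_closed_eq_atLeastAtMost:
  assumes S: "S \<subseteq> {1..(n::nat)}" "1 \<in> S"
    and closed: "\<And>j i. j \<in> S \<Longrightarrow> 1 \<le> i \<Longrightarrow> i \<le> j \<Longrightarrow> i \<in> S"
  shows "S = {1..card S}"
proof -
  define M where "M = Max S"
  have "finite S" using S(1) finite_subset by blast
  then have "M \<in> S" unfolding M_def using S(2) by (intro Max_in) auto
  have "S = {1..M}"
  proof
    show "S \<subseteq> {1..M}" using S(1) \<open>finite S\<close> M_def by (auto intro: Max_ge)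
    show "{1..M} \<subseteq> S" using closed \<open>M \<in> S\<close> by auto
  qed
  then show ?thesis by simp
qed

lemma up_closed_eq_greaterThanAtMost:
  assumes S: "S \<subseteq> {1..(n::nat)}" "n \<in> S"
    and closed: "\<And>j i. j \<in> S \<Longrightarrow> j \<le> i \<Longrightarrow> i \<le> n \<Longrightarrow> i \<in> S"
  shows "S = {n - card S<..n}"
proof -
  define M where "M = Min S"
  have "finite S" using S(1) finite_subset by blast
  then have "M \<in> S" unfolding M_def using S(2) by (intro Min_in) auto
  have S_eq: "S = {M..n}"
  proof
    show "S \<subseteq> {M..n}" using S(1) \<open>finite S\<close> M_def by (auto intro: Min_le)
    show "{M..n} \<subseteq> S" using closed \<open>M \<in> S\<close> by auto
  qed
  have "1 \<le> M" "M \<le> n" using \<open>M \<in> S\<close> S(1) by auto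
  then have "n - card S = M - 1"
    unfolding S_eq by simp
  with \<open>1 \<le> M\<close> show ?thesis
    unfolding S_eq by auto
qed

lemma Lambda_a_boundary_profile:
  assumes mu: "mu \<in> Lambda_a (m + 1) n - Lambda_a m n" and n: "n \<ge> 2"
  defines "a \<equiv> multiplicity_in (mu 1) mu n" and "b \<equiv> multiplicity_in (mu n) mu n"
  shows "a + b \<le> n"
    and "\<And>j. 1 \<le> j \<Longrightarrow> j \<le> a \<Longrightarrow> mu j = mu 1"
    and "\<And>j. n - b < j \<Longrightarrow> j \<le> n \<Longrightarrow> mu j = mu n"
proof -
  define A where "A = {j \<in> {1..n}. mu j = mu 1}"
  define B where "B = {j \<in> {1..n}. mu j = mu n}"
  have "mu \<in> Lambda_a (m + 1) n" using mu by simp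
  note antimono = Lambda_a_antimono[OF this]
  have gap: "mu 1 = mu n + real m + 1"
    by (rule Lambda_a_boundary_gap[OF mu n])
  have A: "A = {1..a}"
    unfolding a_def multiplicity_in_def A_def[symmetric]
  proof (rule down_closed_eq_atLeastAtMost[of _ n])
    show "A \<subseteq> {1..n}" "1 \<in> A" using n by (auto simp: A_def)
  next
    fix j i assume "j \<in> A" "1 \<le> i" "i \<le> j"
    then show "i \<in> A" using antimono[of 1 i] antimono[of i j] by (force simp: A_def)
  qed
  have B: "B = {n - b<..n}"
    unfolding b_def multiplicity_in_def B_def[symmetric]
  proof (rule up_closed_eq_greaterThanAtMost)
    show "B \<subseteq> {1..n}" "n \<in> B" using n by (auto simp: B_def)
  next
    fix j i assume "j \<in> B" "j \<le> i" "i \<le> n"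
    then show "i \<in> B" using antimono[of j i] antimono[of i n] by (force simp: B_def)
  qed
  have "A \<inter> B = {}" using gap by (auto simp: A_def B_def)
  then have "card A + card B = card (A \<union> B)"
    by (simp add: card_Un_disjoint A_def B_def)
  also have "\<dots> \<le> card {1..n}"
    by (rule card_mono) (auto simp: A_def B_def)
  finally have "card A + card B \<le> n" by simp
  moreover have "card A = a" "card B = b"
    unfolding a_def b_def multiplicity_in_def A_def B_def by (rule refl)+
  ultimately show "a + b \<le> n" by simp
  show "mu j = mu 1" if "1 \<le> j" "j \<le> a" for j
  proof -
    have "j \<in> A" unfolding A using that by simp
    then show ?thesis unfolding A_def by simp
  qed
  show "mu j = mu n" if "n - b < j" "j \<le> n" for j
  proof -
    have "j \<in> B" unfolding B using that by simp
    then show ?thesis unfolding B_def by simp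
  qed
qed

lemma sum_std_basis_descending:
  assumes "c \<le> a" "k \<in> {1..n}"
  shows "(\<Sum>j\<in>{1..c}. std_basis n (a + 1 - j) k) = (if a + 1 - c \<le> k \<and> k \<le> a then 1 else 0)"
proof -
  have "(\<Sum>j\<in>{1..c}. std_basis n (a + 1 - j) k) = (\<Sum>j\<in>{1..c}. if j = a + 1 - k then 1 else 0)"
    by (rule sum.cong) (use assms in \<open>auto simp: std_basis_def\<close>)
  also have "\<dots> = (if a + 1 - c \<le> k \<and> k \<le> a then 1 else 0)"
    using assms by auto
  finally show ?thesis .
qed

lemma sum_std_basis_ascending:
  assumes "b \<le> n" "k \<in> {1..n}"
  shows "(\<Sum>j\<in>{1..c}. std_basis n (n - b + j) k) = (if n - b < k \<and> k \<le> n - b + c then 1 else 0)"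
proof -
  have "(\<Sum>j\<in>{1..c}. std_basis n (n - b + j) k) = (\<Sum>j\<in>{1..c}. if j = k - (n - b) then 1 else 0)"
    by (rule sum.cong) (use assms in \<open>auto simp: std_basis_def\<close>)
  also have "\<dots> = (if n - b < k \<and> k \<le> n - b + c then 1 else 0)"
    using assms by auto
  finally show ?thesis .
qed

lemma omega_mu_eq:
  assumes "multiplicity_in (mu 1) mu n = a" "multiplicity_in (mu n) mu n = b" "a + b \<le> n"
    and "k \<in> {1..n}"
  shows "omega_mu n mu k = (if a + 1 - min a b \<le> k \<and> k \<le> a then 1 else 0)
                         - (if n - b < k \<and> k \<le> n - b + min a b then 1 else 0)"
  unfolding omega_mu_def Let_def assms(1,2) sum_subtractf
  using sum_std_basis_descending[OF _ assms(4), of "min a b" a] sum_std_basis_ascending[OF _ assms(4), of b "min a b"] assms(3)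
  by simp

section \<open>Cycling at a node\<close>

definition cycle_shift :: "nat \<Rightarrow> nat \<Rightarrow> (nat \<Rightarrow> real) \<Rightarrow> nat \<Rightarrow> real" where
  "cycle_shift n m a = (\<lambda>j. if j < n then a (Suc j) else a 1 - real m)"

lemma sum_mult_cycle_perm:
  assumes n: "n \<ge> 1"
  shows "(\<Sum>j\<in>{1..n}. y j * a j) = (\<Sum>j\<in>{1..n}. (y \<circ> cycle_perm n) j * cycle_shift n m a j) + real m * y 1"
proof -
  obtain k where k: "n = Suc k" using n by (cases n) auto
  have "(\<Sum>j\<in>{1..n}. (y \<circ> cycle_perm n) j * cycle_shift n m a j) =
      (\<Sum>j\<in>{1..k}. (y \<circ> cycle_perm n) j * cycle_shift n m a j) + (y \<circ> cycle_perm n) n * cycle_shift n m a n"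
    unfolding k by (rule sum.cl_ivl_Suc[THEN trans]) simp
  also have "(\<Sum>j\<in>{1..k}. (y \<circ> cycle_perm n) j * cycle_shift n m a j) = (\<Sum>j\<in>{Suc 1..n}. y j * a j)"
    unfolding k sum.shift_bounds_cl_Suc_ivl
    by (rule sum.cong) (auto simp: cycle_perm_def cycle_shift_def)
  also have "(y \<circ> cycle_perm n) n * cycle_shift n m a n = y 1 * (a 1 - real m)"
    by (simp add: cycle_perm_def cycle_shift_def)
  also have "(\<Sum>j\<in>{1..n}. y j * a j) = y 1 * a 1 + (\<Sum>j\<in>{Suc 1..n}. y j * a j)"
    by (rule sum.atLeast_Suc_atMost) (use n in simp)
  ultimately show ?thesis by (simp add: algebra_simps)
qed

lemma exp_i_2pi_eq_if_diff_Ints: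
  assumes "x - y \<in> \<int>"
  shows "exp (\<i> * complex_of_real (2 * pi * x)) = exp (\<i> * complex_of_real (2 * pi * y))"
proof -
  obtain z where z: "x - y = of_int z" using assms by (auto elim: Ints_cases)
  have "exp (\<i> * complex_of_real (2 * pi * x)) =
      exp (\<i> * complex_of_real (2 * pi * y)) * exp (\<i> * (of_int z * (of_real pi * 2)))"
    unfolding exp_add[symmetric] using z[unfolded diff_eq_eq]
    by (simp add: algebra_simps)
  also have "exp (\<i> * (of_int z * (of_real pi * 2))) = 1"
    by (rule exp_2pi_1_int)
  finally show ?thesis by simp
qed

lemma exp_Bethe_rhs_eq:
  assumes "lam \<in> Lambda_a m n" and "j \<in> {1..n}"
  shows "exp (\<i> * complex_of_real (2 * pi * (lam j + rho_a n j))) =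
         exp (\<i> * complex_of_real (2 * pi * (lam 1 + rho_a n 1)))"
proof (rule exp_i_2pi_eq_if_diff_Ints)
  have "lam j - lam 1 \<in> \<int>"
    using assms by (intro Lambda_a_diff_Ints) auto
  moreover have "rho_a n j - rho_a n 1 = - of_nat (j - 1)"
    using assms(2) by (simp add: rho_a_def field_simps)
  ultimately show "lam j + rho_a n j - (lam 1 + rho_a n 1) \<in> \<int>"
    by (metis Ints_add Ints_minus Ints_of_nat add_diff_add)
qed

lemma sum_v_q_at_node:
  assumes node: "is_node m n q lam xi" and \<sigma>: "\<sigma> permutes {1..n}" and n: "n \<ge> 1"
  shows "(\<Sum>k\<in>{2..n}. v_q q (xi (\<sigma> 1) - xi (\<sigma> k)))
       = 2 * pi * (lam (\<sigma> 1) + rho_a n (\<sigma> 1)) - real m * xi (\<sigma> 1)"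
proof -
  have "{2..n} = {1..n} - {1::nat}" by auto
  then have "\<sigma> ` {2..n} = \<sigma> ` {1..n} - \<sigma> ` {1}"
    using image_set_diff[OF permutes_inj[OF \<sigma>]] by simp
  also have "\<dots> = {1..n} - {\<sigma> 1}"
    using permutes_image[OF \<sigma>] by simp
  finally have img: "\<sigma> ` {2..n} = {1..n} - {\<sigma> 1}" .
  have "(\<Sum>k\<in>{2..n}. v_q q (xi (\<sigma> 1) - xi (\<sigma> k))) = (\<Sum>k\<in>{1..n} - {\<sigma> 1}. v_q q (xi (\<sigma> 1) - xi k))"
    unfolding img[symmetric]
    by (subst sum.reindex) (auto intro: inj_on_subset[OF permutes_inj_on[OF \<sigma>]])
  moreover have "\<sigma> 1 \<in> {1..n}"
    using permutes_in_image[OF \<sigma>] n by simp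
  then have "real m * xi (\<sigma> 1) + (\<Sum>k\<in>{1..n} - {\<sigma> 1}. v_q q (xi (\<sigma> 1) - xi k))
      = 2 * pi * (lam (\<sigma> 1) + rho_a n (\<sigma> 1))"
    using node unfolding is_node_def by blast
  ultimately show ?thesis by linarith
qed

lemma exp_Bethe_phase_at_node:
  assumes node: "is_node m n q lam xi" and lam: "lam \<in> Lambda_a m n"
    and \<sigma>: "\<sigma> permutes {1..n}" and n: "n \<ge> 1"
  shows "exp (\<i> * complex_of_real (\<Sum>k\<in>{2..n}. v_q q (xi (\<sigma> 1) - xi (\<sigma> k))))
       * exp (\<i> * complex_of_real (real m * xi (\<sigma> 1)))
       = exp (\<i> * complex_of_real (2 * pi * (lam 1 + rho_a n 1)))"
proof -
  have "\<sigma> 1 \<in> {1..n}"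
    using permutes_in_image[OF \<sigma>] n by simp
  have "exp (\<i> * complex_of_real (\<Sum>k\<in>{2..n}. v_q q (xi (\<sigma> 1) - xi (\<sigma> k))))
       * exp (\<i> * complex_of_real (real m * xi (\<sigma> 1)))
      = exp (\<i> * complex_of_real ((\<Sum>k\<in>{2..n}. v_q q (xi (\<sigma> 1) - xi (\<sigma> k))) + real m * xi (\<sigma> 1)))"
    by (simp only: of_real_add distrib_left exp_add)
  also have "(\<Sum>k\<in>{2..n}. v_q q (xi (\<sigma> 1) - xi (\<sigma> k))) + real m * xi (\<sigma> 1)
      = 2 * pi * (lam (\<sigma> 1) + rho_a n (\<sigma> 1))"
    using sum_v_q_at_node[OF node \<sigma> n] by simp
  finally show ?thesis
    unfolding exp_Bethe_rhs_eq[OF lam \<open>\<sigma> 1 \<in> {1..n}\<close>] .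
qed

lemma P_term_cycle_at_node:
  assumes n: "n \<ge> 2" and q: "\<bar>q\<bar> < 1"
    and node: "is_node m n q lam xi" and lam: "lam \<in> Lambda_a m n"
    and distinct: "\<And>j k. j \<in> {1..n} \<Longrightarrow> k \<in> {1..n} \<Longrightarrow> j \<noteq> k \<Longrightarrow> exp (\<i> * complex_of_real (xi j - xi k)) \<noteq> 1"
    and \<sigma>: "\<sigma> permutes {1..n}"
  shows "P_term n q xi a \<sigma> = (-1) ^ (n - 1) * exp (\<i> * complex_of_real (2 * pi * (lam 1 + rho_a n 1)))
           * P_term n q xi (cycle_shift n m a) (\<sigma> \<circ> cycle_perm n)"
proof -
  have n1: "n \<ge> 1" using n by simp
  define y where "y = xi \<circ> \<sigma>"
  define V where "V = (\<Sum>k\<in>{2..n}. v_q q (y 1 - y k))"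
  have "exp (\<i> * complex_of_real (y 1 - y k)) \<noteq> 1" if "k \<in> {2..n}" for k
    unfolding y_def o_def
    by (intro distinct) (use that n permutes_in_image[OF \<sigma>] permutes_inj[OF \<sigma>] in \<open>auto simp: inj_eq\<close>)
  then have reflect: "(\<Prod>k\<in>{2..n}. C_factor q (y 1 - y k)) =
      (-1) ^ (n - 1) * exp (\<i> * complex_of_real V) * (\<Prod>k\<in>{2..n}. C_factor q (y k - y 1))"
    using prod_C_factor_reflect[OF q, of "{2..n}" "\<lambda>k. y 1 - y k"] unfolding V_def by simp
  have phase: "exp (\<i> * complex_of_real V) * exp (\<i> * complex_of_real (real m * y 1))
      = exp (\<i> * complex_of_real (2 * pi * (lam 1 + rho_a n 1)))"
    unfolding V_def y_def o_def by (rule exp_Bethe_phase_at_node[OF node lam \<sigma> n1])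
  define S where "S = exp (\<i> * complex_of_real (\<Sum>j\<in>{1..n}. (y \<circ> cycle_perm n) j * cycle_shift n m a j))"
  have "P_term n q xi a \<sigma> = C_a n y q * (S * exp (\<i> * complex_of_real (real m * y 1)))"
    unfolding P_term_def y_def[symmetric] S_def sum_mult_cycle_perm[OF n1, of y a m]
    by (simp only: of_real_add distrib_left exp_add)
  also have "\<dots> = (-1) ^ (n - 1) *
      (exp (\<i> * complex_of_real V) * exp (\<i> * complex_of_real (real m * y 1))) * (C_a n (y \<circ> cycle_perm n) q * S)"
    unfolding C_a_split_first[OF n1, of y] C_a_cycle_perm[OF n] reflect by (simp only: mult_ac)
  also have "\<dots> = (-1) ^ (n - 1) * exp (\<i> * complex_of_real (2 * pi * (lam 1 + rho_a n 1)))
           * P_term n q xi (cycle_shift n m a) (\<sigma> \<circ> cycle_perm n)"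
    unfolding phase unfolding P_term_def S_def y_def o_assoc ..
  finally show ?thesis .
qed

lemma P_a_cycle_at_node:
  assumes n: "n \<ge> 2" and q: "\<bar>q\<bar> < 1"
    and node: "is_node m n q lam xi" and lam: "lam \<in> Lambda_a m n"
    and distinct: "\<And>j k. j \<in> {1..n} \<Longrightarrow> k \<in> {1..n} \<Longrightarrow> j \<noteq> k \<Longrightarrow> exp (\<i> * complex_of_real (xi j - xi k)) \<noteq> 1"
  shows "P_a n a xi q = (-1) ^ (n - 1) * exp (\<i> * complex_of_real (2 * pi * (lam 1 + rho_a n 1)))
           * P_a n (cycle_shift n m a) xi q"
proof -
  have cycle: "cycle_perm n permutes {1..n}"
    using n by (intro cycle_perm_permutes) simp
  have "P_a n a xi q = (\<Sum>\<sigma>\<in>{\<sigma>. \<sigma> permutes {1..n}}. (-1) ^ (n - 1) * exp (\<i> * complex_of_real (2 * pi * (lam 1 + rho_a n 1)))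
           * P_term n q xi (cycle_shift n m a) (\<sigma> \<circ> cycle_perm n))"
    unfolding P_a_eq_sum_P_term
    by (intro sum.cong refl P_term_cycle_at_node[OF n q node lam distinct]) simp_all
  also have "\<dots> = (-1) ^ (n - 1) * exp (\<i> * complex_of_real (2 * pi * (lam 1 + rho_a n 1)))
           * P_a n (cycle_shift n m a) xi q"
    unfolding P_a_eq_sum_P_term sum_distrib_left[symmetric]
    by (simp only: sum_permutations_compose_right[OF cycle, symmetric])
  finally show ?thesis .
qed

definition rotate_weight :: "nat \<Rightarrow> nat \<Rightarrow> nat \<Rightarrow> (nat \<Rightarrow> real) \<Rightarrow> nat \<Rightarrow> real" where
  "rotate_weight n m k a = (\<lambda>j. if j + k \<le> n then a (j + k) else a (j + k - n) - real m)"

lemma P_a_rotate: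
  assumes cycle: "\<And>a. P_a n a xi q = c * P_a n (cycle_shift n m a) xi q" and "k \<le> n"
  shows "P_a n a xi q = c ^ k * P_a n (rotate_weight n m k a) xi q"
  using assms(2)
proof (induction k)
  case 0
  show ?case by (simp, rule P_a_cong) (auto simp: rotate_weight_def)
next
  case (Suc k)
  then have "P_a n a xi q = c ^ k * P_a n (rotate_weight n m k a) xi q" by simp
  also have "P_a n (rotate_weight n m k a) xi q = c * P_a n (cycle_shift n m (rotate_weight n m k a)) xi q"
    by (rule cycle)
  also have "P_a n (cycle_shift n m (rotate_weight n m k a)) xi q = P_a n (rotate_weight n m (Suc k) a) xi q"
    by (rule P_a_cong) (use Suc.prems in \<open>auto simp: cycle_shift_def rotate_weight_def\<close>)
  finally show ?case by simp
qed

section \<open>Exchange for weights of level m + 1\<close>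

lemma rotate_boundary_weight:
  assumes mu: "mu \<in> Lambda_a (m + 1) n - Lambda_a m n" and n: "n \<ge> 2" and j: "j \<in> {1..n}"
  defines "a \<equiv> multiplicity_in (mu 1) mu n" and "b \<equiv> multiplicity_in (mu n) mu n"
  shows "rotate_weight n m a mu j = block_weight (n - a - b) b (\<lambda>j. mu (j + a)) (mu n) 0 j"
proof -
  note profile = Lambda_a_boundary_profile[OF mu n, folded a_def b_def]
  show ?thesis
  proof (cases "j + a \<le> n")
    case True
    then show ?thesis
      using profile(1) profile(3)[of "j + a"] by (auto simp: rotate_weight_def block_weight_def)
  next
    case False
    then have "mu (j + a - n) = mu 1" using j profile(1) by (intro profile(2)) auto
    then show ?thesis
      using False j profile(1) Lambda_a_boundary_gap[OF mu n] by (auto simp: rotate_weight_def block_weight_def)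
  qed
qed

lemma rotate_boundary_weight_minus_omega:
  assumes mu: "mu \<in> Lambda_a (m + 1) n - Lambda_a m n" and n: "n \<ge> 2" and j: "j \<in> {1..n}"
  defines "a \<equiv> multiplicity_in (mu 1) mu n" and "b \<equiv> multiplicity_in (mu n) mu n"
  defines "t \<equiv> n - a - b"
  shows "rotate_weight n m a (\<lambda>k. mu k - omega_mu n mu k) j = block_weight t b (\<lambda>j. mu (j + a)) (mu n) a j"
proof -
  note profile = Lambda_a_boundary_profile[OF mu n, folded a_def b_def]
  have tab: "t + a + b = n"
    using profile(1) unfolding t_def by simp
  have omega: "omega_mu n mu k = (if a + 1 - min a b \<le> k \<and> k \<le> a then 1 else 0)
                         - (if n - b < k \<and> k \<le> n - b + min a b then 1 else 0)" if "k \<in> {1..n}" for k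
    by (rule omega_mu_eq) (use a_def b_def profile(1) that in auto)
  show ?thesis
  proof (cases "j + a \<le> n")
    case True
    have k: "j + a \<in> {1..n}" using True j by auto
    show ?thesis
    proof (cases "j \<le> t")
      case True
      then have "omega_mu n mu (j + a) = 0" using omega[OF k] tab j by auto
      then show ?thesis using True \<open>j + a \<le> n\<close> by (simp add: rotate_weight_def block_weight_def)
    next
      case False
      then have "mu (j + a) = mu n" using \<open>j + a \<le> n\<close> tab by (intro profile(3)) auto
      moreover have "omega_mu n mu (j + a) = - (if j \<le> t + a then 1 else 0)"
        using omega[OF k] tab False True by (auto simp: min_def)
      ultimately show ?thesis using False \<open>j + a \<le> n\<close> tab by (auto simp: rotate_weight_def block_weight_def)
    qed
  next
    case False
    have k: "j + a - n \<in> {1..n}" using False j tab by auto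
    have "mu (j + a - n) = mu 1" using j tab False by (intro profile(2)) auto
    moreover have "omega_mu n mu (j + a - n) = (if j \<le> t + a then 0 else 1)"
      using omega[OF k] tab False j by (auto simp: min_def)
    ultimately show ?thesis
      using False j tab Lambda_a_boundary_gap[OF mu n] by (auto simp: rotate_weight_def block_weight_def)
  qed
qed

lemma P_a_boundary_exchange:
  assumes mu: "mu \<in> Lambda_a (m + 1) n - Lambda_a m n" and n: "n \<ge> 2"
    and cycle: "\<And>a. P_a n a xi q = c * P_a n (cycle_shift n m a) xi q"
  defines "a \<equiv> multiplicity_in (mu 1) mu n" and "b \<equiv> multiplicity_in (mu n) mu n"
  shows "P_a n mu xi q = complex_of_real q ^ (a * b) * P_a n (\<lambda>k. mu k - omega_mu n mu k) xi q"
proof -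
  define t where "t = n - a - b"
  define M where "M = (\<lambda>j. mu (j + a))"
  have tab: "t + a + b = n"
    using Lambda_a_boundary_profile(1)[OF mu n] unfolding t_def a_def b_def by simp
  have "P_a n mu xi q = c ^ a * P_a n (rotate_weight n m a mu) xi q"
    by (rule P_a_rotate[OF cycle]) (use tab in simp)
  also have "P_a n (rotate_weight n m a mu) xi q = P_a n (block_weight t b M (mu n) 0) xi q"
    unfolding t_def M_def a_def b_def by (rule P_a_cong) (rule rotate_boundary_weight[OF mu n])
  also have "\<dots> = complex_of_real q ^ (b * a) * P_a n (block_weight t b M (mu n) a) xi q"
    by (rule P_a_block[OF tab order.refl])
  also have "P_a n (block_weight t b M (mu n) a) xi q = P_a n (rotate_weight n m a (\<lambda>k. mu k - omega_mu n mu k)) xi q"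
    unfolding t_def M_def a_def b_def by (rule P_a_cong) (rule rotate_boundary_weight_minus_omega[OF mu n, symmetric])
  also have "c ^ a * (complex_of_real q ^ (b * a) * \<dots>) = complex_of_real q ^ (a * b) * (c ^ a * \<dots>)"
    by (simp add: mult.commute mult.left_commute)
  also have "c ^ a * P_a n (rotate_weight n m a (\<lambda>k. mu k - omega_mu n mu k)) xi q
      = P_a n (\<lambda>k. mu k - omega_mu n mu k) xi q"
    by (rule P_a_rotate[OF cycle, symmetric]) (use tab in simp)
  finally show ?thesis .
qed

theorem mainTheorem5:
  fixes n m :: nat and q :: real and lam mu xi :: "nat \<Rightarrow> real"
  assumes "n \<ge> 2" and "m > 0" and "-1 < q" and "q < 1"
    and "lam \<in> Lambda_a m n"
    and "mu \<in> Lambda_a (m + 1) n - Lambda_a m n"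
    and "is_node m n q lam xi"
  shows "Q_a n mu xi q = 0"
proof (cases "\<exists>j\<in>{1..n}. \<exists>k\<in>{1..n}. j \<noteq> k \<and> exp (\<i> * complex_of_real (xi j - xi k)) = 1")
  case True
  then obtain j k where "j \<in> {1..n}" "k \<in> {1..n}" "j \<noteq> k" "exp (\<i> * complex_of_real (xi j - xi k)) = 1"
    by blast
  then have "P_a n a xi q = 0" for a
    by (rule P_a_eq_0_if_coincident)
  then show ?thesis
    unfolding Q_a_def by simp
next
  case False
  have "\<bar>q\<bar> < 1" using assms(3,4) by auto
  have "P_a n a xi q = (-1) ^ (n - 1) * exp (\<i> * complex_of_real (2 * pi * (lam 1 + rho_a n 1)))
      * P_a n (cycle_shift n m a) xi q" for a
    by (rule P_a_cycle_at_node[OF assms(1) \<open>\<bar>q\<bar> < 1\<close> assms(7,5)]) (use False in blast)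
  then have "P_a n mu xi q = complex_of_real q ^ (multiplicity_in (mu 1) mu n * multiplicity_in (mu n) mu n)
      * P_a n (\<lambda>k. mu k - omega_mu n mu k) xi q"
    by (rule P_a_boundary_exchange[OF assms(6,1)])
  then show ?thesis
    unfolding Q_a_def by simp
qed

end
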